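(* Let the alternate quantum walk on $\mathbb{Z}^2$ with a single-qubit coin be defined on states $\sum_{x,y\in\mathbb{Z},\,c\in\{0,1\}}\beta_{x,y,c}(t)|x,y,c\rangle$, where one time step is $\hat S_y\hat H\hat S_x\hat H$, with $\hat H=\frac{1}{\sqrt2}\begin{pmatrix}1&1\\1&-1\end{pmatrix}$ acting on the coin, $\hat S_x|i,j,0\rangle=|i-1,j,0\rangle$, $\hat S_x|i,j,1\rangle=|i+1,j,1\rangle$, $\hat S_y|i,j,0\rangle=|i,j-1,0\rangle$, $\hat S_y|i,j,1\rangle=|i,j+1,1\rangle$. Start it at the origin with $\beta_{0,0,0}(0)=1/\sqrt2$, $\beta_{0,0,1}(0)=i/\sqrt2$ (all other amplitudes zero). Let the Grover walk have real amplitudes $\alpha_{x,y,c'}(t)$, $c'\in\{0,1,2,3\}$, evolving by $\alpha_{x,y,0}(t+1)=\sum_{j}G_{0j}\alpha_{x+1,y+1,j}(t)$, $\alpha_{x,y,1}(t+1)=\sum_{j}G_{1j}\alpha_{x+1,y-1,j}(t)$, $\alpha_{x,y,2}(t+1)=\sum_{j}G_{2j}\alpha_{x-1,y+1,j}(t)$, $\alpha_{x,y,3}(t+1)=\sum_{j}G_{3j}\alpha_{x-1,y-1,j}(t)$, where $G=\frac12\begin{pmatrix}-1&1&1&1\\1&-1&1&1\\1&1&-1&1\\1&1&1&-1\end{pmatrix}$, started at the origin with $\alpha_{0,0,0}(0)=1/2$, $\alpha_{0,0,1}(0)=-1/2$, $\alpha_{0,0,2}(0)=-1/2$, $\alpha_{0,0,3}(0)=1/2$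 (all other amplitudes zero). Then for all $t\ge0$ and all $(x,y)\in\mathbb{Z}^2$, \[ \beta_{x,y,0}(t)=(-1)^t e^{i\pi/4}\,[\alpha_{x,y,0}(t)+i\,\alpha_{x,y,2}(t)],\qquad \beta_{x,y,1}(t)=(-1)^t e^{i\pi/4}\,[-\alpha_{x,y,1}(t)+i\,\alpha_{x,y,3}(t)]. \]
   Context: $|x,y,c\rangle=|x,y\rangle_W\otimes|c\rangle_C$ with walker basis states $|x,y\rangle$, $x,y\in\mathbb{Z}$. In the Grover walk, coin states $|0\rangle,|1\rangle,|2\rangle,|3\rangle$ correspond to moves left-down, left-up, right-down, right-up, applied after the coin $G$. *)

theory Defs
  imports Complex_Main
begin

text \<open>States of the alternate walk: amplitudes beta x y c, coin c in {0,1}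
  (values at other coin indices are unused and kept 0).\<close>
type_synonym astate = "int \<Rightarrow> int \<Rightarrow> nat \<Rightarrow> complex"

definition hadamard :: "astate \<Rightarrow> astate" where
  "hadamard \<psi> = (\<lambda>x y c.
     if c = 0 then (\<psi> x y 0 + \<psi> x y 1) / complex_of_real (sqrt 2)
     else if c = 1 then (\<psi> x y 0 - \<psi> x y 1) / complex_of_real (sqrt 2)
     else 0)"

text \<open>S_x |i,j,0> = |i-1,j,0>, S_x |i,j,1> = |i+1,j,1>, so on amplitudes:\<close>
definition shift_x :: "astate \<Rightarrow> astate" where
  "shift_x \<psi> = (\<lambda>x y c.
     if c = 0 then \<psi> (x + 1) y 0 else if c = 1 then \<psi> (x - 1) y 1 else 0)"

definition shift_y :: "astate \<Rightarrow> astate" where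
  "shift_y \<psi> = (\<lambda>x y c.
     if c = 0 then \<psi> x (y + 1) 0 else if c = 1 then \<psi> x (y - 1) 1 else 0)"

definition alt_step :: "astate \<Rightarrow> astate" where
  "alt_step \<psi> = shift_y (hadamard (shift_x (hadamard \<psi>)))"

definition beta0 :: astate where
  "beta0 = (\<lambda>x y c. if x = 0 \<and> y = 0 then
      (if c = 0 then 1 / complex_of_real (sqrt 2)
       else if c = 1 then \<i> / complex_of_real (sqrt 2) else 0)
    else 0)"

primrec beta :: "nat \<Rightarrow> astate" where
  "beta 0 = beta0"
| "beta (Suc t) = alt_step (beta t)"

definition grover :: "nat \<Rightarrow> nat \<Rightarrow> real" where
  "grover j k = (if j = k then - 1 / 2 else 1 / 2)"

definition alpha0 :: "int \<Rightarrow> int \<Rightarrow> nat \<Rightarrow> real" where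
  "alpha0 = (\<lambda>x y c. if x = 0 \<and> y = 0 then
      (if c = 0 then 1/2 else if c = 1 then -1/2 else if c = 2 then -1/2
       else if c = 3 then 1/2 else 0)
    else 0)"

primrec alpha :: "nat \<Rightarrow> int \<Rightarrow> int \<Rightarrow> nat \<Rightarrow> real" where
  "alpha 0 = alpha0"
| "alpha (Suc t) = (\<lambda>x y c.
     if c = 0 then (\<Sum>j<4. grover 0 j * alpha t (x + 1) (y + 1) j)
     else if c = 1 then (\<Sum>j<4. grover 1 j * alpha t (x + 1) (y - 1) j)
     else if c = 2 then (\<Sum>j<4. grover 2 j * alpha t (x - 1) (y + 1) j)
     else if c = 3 then (\<Sum>j<4. grover 3 j * alpha t (x - 1) (y - 1) j)
     else 0)"

end

theory Submission
  imports Defs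
begin

text \<open>The Grover walk started at alpha0 never leaves the subspace cut out by the linear
  relations of \<open>grover_reduced\<close>. On that subspace the four real Grover amplitudes carry
  exactly the information of two complex amplitudes, and the merging map \<open>coin_merge\<close>
  intertwines one Grover step with one alternate step up to the sign -1. The initial states
  correspond up to the phase exp (i pi/4), so the claim follows by induction on t.\<close>

definition grover_step :: "(int \<Rightarrow> int \<Rightarrow> nat \<Rightarrow> real) \<Rightarrow> int \<Rightarrow> int \<Rightarrow> nat \<Rightarrow> real" where
  "grover_step a = (\<lambda>x y c.
     if c = 0 then (\<Sum>j<4. grover 0 j * a (x + 1) (y + 1) j)
     else if c = 1 then (\<Sum>j<4. grover 1 j * a (x + 1) (y - 1) j)
     else if c = 2 then (\<Sum>j<4. grover 2 j * a (x - 1) (y + 1) j)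
     else if c = 3 then (\<Sum>j<4. grover 3 j * a (x - 1) (y - 1) j)
     else 0)"

lemma alpha_Suc: "alpha (Suc t) = grover_step (alpha t)"
  by (simp add: grover_step_def)

lemma grover_step_coins:
  "grover_step a x y 0 = (- a (x+1) (y+1) 0 + a (x+1) (y+1) 1 + a (x+1) (y+1) 2 + a (x+1) (y+1) 3) / 2"
  "grover_step a x y 1 = (a (x+1) (y-1) 0 - a (x+1) (y-1) 1 + a (x+1) (y-1) 2 + a (x+1) (y-1) 3) / 2"
  "grover_step a x y 2 = (a (x-1) (y+1) 0 + a (x-1) (y+1) 1 - a (x-1) (y+1) 2 + a (x-1) (y+1) 3) / 2"
  "grover_step a x y 3 = (a (x-1) (y-1) 0 + a (x-1) (y-1) 1 + a (x-1) (y-1) 2 - a (x-1) (y-1) 3) / 2"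
  by (simp_all add: grover_step_def grover_def eval_nat_numeral field_simps)

definition grover_reduced :: "(int \<Rightarrow> int \<Rightarrow> nat \<Rightarrow> real) \<Rightarrow> bool" where
  "grover_reduced a \<longleftrightarrow> (\<forall>x y.
     a (x + 2) y 2 + a (x + 2) y 3 + a x y 0 + a x y 1 = 0 \<and>
     a x y 1 + a x y 3 + a x (y - 2) 0 + a x (y - 2) 2 = 0)"

lemma grover_reduced_alpha0: "grover_reduced alpha0"
  by (simp add: grover_reduced_def alpha0_def)

text \<open>Each relation at time t+1 is the other relation at time t, at a shifted site.\<close>
lemma grover_reduced_step:
  assumes "grover_reduced a"
  shows "grover_reduced (grover_step a)"
  unfolding grover_reduced_def
proof (intro allI conjI)
  fix x y :: int
  have "a (x+1) (y+1) 1 + a (x+1) (y+1) 3 + a (x+1) (y-1) 0 + a (x+1) (y-1) 2 = 0"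
    using assms[unfolded grover_reduced_def, rule_format, of "x+1" "y+1"] by simp
  then show "grover_step a (x + 2) y 2 + grover_step a (x + 2) y 3
      + grover_step a x y 0 + grover_step a x y 1 = 0"
    unfolding grover_step_coins by (simp add: field_simps)
  have "a (x+1) (y-1) 2 + a (x+1) (y-1) 3 + a (x-1) (y-1) 0 + a (x-1) (y-1) 1 = 0"
    using assms[unfolded grover_reduced_def, rule_format, of "x-1" "y-1"] by (simp add: algebra_simps)
  then show "grover_step a x y 1 + grover_step a x y 3
      + grover_step a x (y - 2) 0 + grover_step a x (y - 2) 2 = 0"
    unfolding grover_step_coins by (simp add: field_simps)
qed

lemma grover_reduced_alpha: "grover_reduced (alpha t)"
  by (induction t) (simp_all add: grover_reduced_alpha0 grover_reduced_step alpha_Suc del: alpha.simps(2))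

definition coin_merge :: "(int \<Rightarrow> int \<Rightarrow> nat \<Rightarrow> real) \<Rightarrow> astate" where
  "coin_merge a = (\<lambda>x y c.
     if c = 0 then complex_of_real (a x y 0) + \<i> * complex_of_real (a x y 2)
     else if c = 1 then - complex_of_real (a x y 1) + \<i> * complex_of_real (a x y 3)
     else 0)"

lemma alt_step_coins:
  "alt_step \<psi> x y 0 = (\<psi> (x+1) (y+1) 0 + \<psi> (x+1) (y+1) 1 + \<psi> (x-1) (y+1) 0 - \<psi> (x-1) (y+1) 1) / 2"
  "alt_step \<psi> x y 1 = (\<psi> (x+1) (y-1) 0 + \<psi> (x+1) (y-1) 1 - \<psi> (x-1) (y-1) 0 + \<psi> (x-1) (y-1) 1) / 2"
  "c \<ge> 2 \<Longrightarrow> alt_step \<psi> x y c = 0"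
proof -
  have sqrt2: "complex_of_real (sqrt 2) * complex_of_real (sqrt 2) = 2"
    by (simp flip: of_real_mult)
  show "alt_step \<psi> x y 0 = (\<psi> (x+1) (y+1) 0 + \<psi> (x+1) (y+1) 1 + \<psi> (x-1) (y+1) 0 - \<psi> (x-1) (y+1) 1) / 2"
       "alt_step \<psi> x y 1 = (\<psi> (x+1) (y-1) 0 + \<psi> (x+1) (y-1) 1 - \<psi> (x-1) (y-1) 0 + \<psi> (x-1) (y-1) 1) / 2"
    by (simp_all add: alt_step_def shift_x_def shift_y_def hadamard_def
        add_divide_distrib [symmetric] diff_divide_distrib [symmetric] divide_divide_eq_left sqrt2)
  show "c \<ge> 2 \<Longrightarrow> alt_step \<psi> x y c = 0"
    by (simp add: alt_step_def shift_y_def)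
qed

lemma alt_step_scale: "alt_step (\<lambda>x y c. k * \<psi> x y c) = (\<lambda>x y c. k * alt_step \<psi> x y c)"
  by (simp add: alt_step_def shift_x_def shift_y_def hadamard_def fun_eq_iff field_simps)

text \<open>The alternate step only sees two complex coins, while the Grover step mixes four real
  ones; the first relation of \<open>grover_reduced\<close> eliminates the surplus coin-3 amplitude.\<close>
lemma alt_step_coin_merge:
  assumes "grover_reduced a"
  shows "alt_step (coin_merge a) = - coin_merge (grover_step a)"
proof (rule ext)+
  fix x y :: int and c :: nat
  have coin3_up: "a (x+1) (y+1) 3 = - a (x+1) (y+1) 2 - a (x-1) (y+1) 0 - a (x-1) (y+1) 1"
    using assms[unfolded grover_reduced_def, rule_format, of "x-1" "y+1"] by (simp add: algebra_simps)
  have coin3_down: "a (x+1) (y-1) 3 = - a (x+1) (y-1) 2 - a (x-1) (y-1) 0 - a (x-1) (y-1) 1"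
    using assms[unfolded grover_reduced_def, rule_format, of "x-1" "y-1"] by (simp add: algebra_simps)
  consider "c = 0" | "c = 1" | "c \<ge> 2"
    by linarith
  then show "alt_step (coin_merge a) x y c = (- coin_merge (grover_step a)) x y c"
  proof cases
    case 1
    \<comment> \<open>unfold before simp, which would rewrite the coin index 1 to Suc 0\<close>
    then show ?thesis
      unfolding 1 alt_step_coins(1) fun_Compl_def grover_step_coins coin_merge_def
      by (simp add: coin3_up) (simp add: field_simps)
  next
    case 2
    then show ?thesis
      unfolding 2 alt_step_coins(2) fun_Compl_def grover_step_coins coin_merge_def
      by (simp add: coin3_down) (simp add: field_simps)
  next
    case 3
    then show ?thesis
      by (simp add: alt_step_coins coin_merge_def)
  qed
qed

lemma exp_i_pi_quarter: "exp (\<i> * complex_of_real (pi / 4)) = (1 + \<i>) / complex_of_real (sqrt 2)"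
proof -
  have "exp (\<i> * complex_of_real (pi / 4)) = cis (pi / 4)"
    by (simp add: cis_conv_exp mult.commute)
  also have "\<dots> = (1 + \<i>) / complex_of_real (sqrt 2)"
    by (simp add: cis.ctr sin_45 cos_45 complex_eq_iff real_div_sqrt)
  finally show ?thesis .
qed

lemma beta0_coin_merge:
  "beta0 = (\<lambda>x y c. exp (\<i> * complex_of_real (pi / 4)) * coin_merge alpha0 x y c)"
proof -
  have "complex_of_real (sqrt 2) \<noteq> 0"
    by simp
  then show ?thesis
    unfolding exp_i_pi_quarter
    by (auto simp: fun_eq_iff beta0_def alpha0_def coin_merge_def field_simps)
qed

lemma beta_coin_merge:
  "beta t = (\<lambda>x y c. (-1) ^ t * exp (\<i> * complex_of_real (pi / 4)) * coin_merge (alpha t) x y c)"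
proof (induction t)
  case 0
  show ?case
    by (simp add: beta0_coin_merge)
next
  case (Suc t)
  then show ?case
    by (simp add: alt_step_scale alt_step_coin_merge grover_reduced_alpha alpha_Suc del: alpha.simps(2))
qed

theorem theorem1:
  fixes t :: nat and x y :: int
  shows "beta t x y 0 = (-1) ^ t * exp (\<i> * complex_of_real (pi / 4)) *
           (complex_of_real (alpha t x y 0) + \<i> * complex_of_real (alpha t x y 2))
       \<and> beta t x y 1 = (-1) ^ t * exp (\<i> * complex_of_real (pi / 4)) *
           (- complex_of_real (alpha t x y 1) + \<i> * complex_of_real (alpha t x y 3))"
  by (simp add: beta_coin_merge coin_merge_def)

end
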